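(* For every group $G$ and every ring $k$, the set $D^1(k[G])$ with its addition and multiplication is a ring with unit $(1_G,0)$ and zero element $(0,0)$.
   Context: For a ring $k$ and group $G$, $k[G]$ is the group ring, and $(k[G])[G]$ is the set of finitely supported maps $\beta\colon G\to k[G]$, $g\mapsto\beta(g)$, with $\beta(g)(h)\in k$. $D^1(k[G])=k[G]\times(k[G])[G]$ with componentwise addition and multiplication $(\alpha_1,\beta_1)*(\alpha_2,\beta_2)=(\alpha_1\alpha_2,\ \alpha_1\beta_2+\beta_1\alpha_2+\beta_1\beta_2)$, where $\alpha_1\alpha_2$ is the group ring product and, for $\alpha\in k[G]$, $\beta,\gamma\in(k[G])[G]$, $g,h\in G$: $(\alpha\beta)(g)(h)=\sum_{t\in G}\alpha(t)\beta(gt)(t^{-1}h)$, $(\beta\alpha)(g)(h)=\sum_{t\in G}\beta(g)(t)\alpha(t^{-1}h)$, $(\beta\gamma)(g)(h)=\sum_{t\in G}\beta(g)(t)\gamma(gt)(t^{-1}h)$. *)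

theory Defs
  imports "HOL-Algebra.Ring" "HOL-Algebra.Group"
begin

text \<open>This renders the
  formally infinite sums over t in G, whose summands have finite support.\<close>
definition fs_sum :: "('k, 'c) ring_scheme \<Rightarrow> 'g set \<Rightarrow> ('g \<Rightarrow> 'k) \<Rightarrow> 'k" where
  "fs_sum k A f = finsum k f {x \<in> A. f x \<noteq> \<zero>\<^bsub>k\<^esub>}"

definition grp_ring_carrier :: "('g, 'b) monoid_scheme \<Rightarrow> ('k, 'c) ring_scheme \<Rightarrow> ('g \<Rightarrow> 'k) set" where
  "grp_ring_carrier G k = {\<alpha>. (\<forall>x\<in>carrier G. \<alpha> x \<in> carrier k)
      \<and> (\<forall>x. x \<notin> carrier G \<longrightarrow> \<alpha> x = \<zero>\<^bsub>k\<^esub>)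
      \<and> finite {x \<in> carrier G. \<alpha> x \<noteq> \<zero>\<^bsub>k\<^esub>}}"

definition gr_zero :: "('g, 'b) monoid_scheme \<Rightarrow> ('k, 'c) ring_scheme \<Rightarrow> 'g \<Rightarrow> 'k" where
  "gr_zero G k = (\<lambda>x. \<zero>\<^bsub>k\<^esub>)"

definition gr_one :: "('g, 'b) monoid_scheme \<Rightarrow> ('k, 'c) ring_scheme \<Rightarrow> 'g \<Rightarrow> 'k" where
  "gr_one G k = (\<lambda>x. if x = \<one>\<^bsub>G\<^esub> then \<one>\<^bsub>k\<^esub> else \<zero>\<^bsub>k\<^esub>)"

definition gr_add :: "('g, 'b) monoid_scheme \<Rightarrow> ('k, 'c) ring_scheme \<Rightarrow> ('g \<Rightarrow> 'k) \<Rightarrow> ('g \<Rightarrow> 'k) \<Rightarrow> 'g \<Rightarrow> 'k" where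
  "gr_add G k a b = (\<lambda>x. if x \<in> carrier G then a x \<oplus>\<^bsub>k\<^esub> b x else \<zero>\<^bsub>k\<^esub>)"

definition gr_mult :: "('g, 'b) monoid_scheme \<Rightarrow> ('k, 'c) ring_scheme \<Rightarrow> ('g \<Rightarrow> 'k) \<Rightarrow> ('g \<Rightarrow> 'k) \<Rightarrow> 'g \<Rightarrow> 'k" where
  "gr_mult G k a b = (\<lambda>h. if h \<in> carrier G
      then fs_sum k (carrier G) (\<lambda>t. a t \<otimes>\<^bsub>k\<^esub> b (inv\<^bsub>G\<^esub> t \<otimes>\<^bsub>G\<^esub> h))
      else \<zero>\<^bsub>k\<^esub>)"

definition grgr_carrier :: "('g, 'b) monoid_scheme \<Rightarrow> ('k, 'c) ring_scheme \<Rightarrow> ('g \<Rightarrow> 'g \<Rightarrow> 'k) set" where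
  "grgr_carrier G k = {\<beta>. (\<forall>g\<in>carrier G. \<beta> g \<in> grp_ring_carrier G k)
      \<and> (\<forall>g. g \<notin> carrier G \<longrightarrow> \<beta> g = gr_zero G k)
      \<and> finite {g \<in> carrier G. \<beta> g \<noteq> gr_zero G k}}"

definition grgr_add :: "('g, 'b) monoid_scheme \<Rightarrow> ('k, 'c) ring_scheme \<Rightarrow> ('g \<Rightarrow> 'g \<Rightarrow> 'k) \<Rightarrow> ('g \<Rightarrow> 'g \<Rightarrow> 'k) \<Rightarrow> 'g \<Rightarrow> 'g \<Rightarrow> 'k" where
  "grgr_add G k \<beta> \<gamma> = (\<lambda>g. if g \<in> carrier G then gr_add G k (\<beta> g) (\<gamma> g) else gr_zero G k)"

definition act_left :: "('g, 'b) monoid_scheme \<Rightarrow> ('k, 'c) ring_scheme \<Rightarrow> ('g \<Rightarrow> 'k) \<Rightarrow> ('g \<Rightarrow> 'g \<Rightarrow> 'k) \<Rightarrow> 'g \<Rightarrow> 'g \<Rightarrow> 'k" where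
  "act_left G k \<alpha> \<beta> = (\<lambda>g h. if g \<in> carrier G \<and> h \<in> carrier G
      then fs_sum k (carrier G) (\<lambda>t. \<alpha> t \<otimes>\<^bsub>k\<^esub> \<beta> (g \<otimes>\<^bsub>G\<^esub> t) (inv\<^bsub>G\<^esub> t \<otimes>\<^bsub>G\<^esub> h))
      else \<zero>\<^bsub>k\<^esub>)"

definition act_right :: "('g, 'b) monoid_scheme \<Rightarrow> ('k, 'c) ring_scheme \<Rightarrow> ('g \<Rightarrow> 'g \<Rightarrow> 'k) \<Rightarrow> ('g \<Rightarrow> 'k) \<Rightarrow> 'g \<Rightarrow> 'g \<Rightarrow> 'k" where
  "act_right G k \<beta> \<alpha> = (\<lambda>g h. if g \<in> carrier G \<and> h \<in> carrier G
      then fs_sum k (carrier G) (\<lambda>t. \<beta> g t \<otimes>\<^bsub>k\<^esub> \<alpha> (inv\<^bsub>G\<^esub> t \<otimes>\<^bsub>G\<^esub> h))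
      else \<zero>\<^bsub>k\<^esub>)"

definition grgr_mult :: "('g, 'b) monoid_scheme \<Rightarrow> ('k, 'c) ring_scheme \<Rightarrow> ('g \<Rightarrow> 'g \<Rightarrow> 'k) \<Rightarrow> ('g \<Rightarrow> 'g \<Rightarrow> 'k) \<Rightarrow> 'g \<Rightarrow> 'g \<Rightarrow> 'k" where
  "grgr_mult G k \<beta> \<gamma> = (\<lambda>g h. if g \<in> carrier G \<and> h \<in> carrier G
      then fs_sum k (carrier G) (\<lambda>t. \<beta> g t \<otimes>\<^bsub>k\<^esub> \<gamma> (g \<otimes>\<^bsub>G\<^esub> t) (inv\<^bsub>G\<^esub> t \<otimes>\<^bsub>G\<^esub> h))
      else \<zero>\<^bsub>k\<^esub>)"

definition D1 :: "('g, 'b) monoid_scheme \<Rightarrow> ('k, 'c) ring_scheme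
    \<Rightarrow> (('g \<Rightarrow> 'k) \<times> ('g \<Rightarrow> 'g \<Rightarrow> 'k)) ring" where
  "D1 G k = \<lparr>carrier = grp_ring_carrier G k \<times> grgr_carrier G k,
     mult = (\<lambda>(a1, b1) (a2, b2). (gr_mult G k a1 a2,
         grgr_add G k (grgr_add G k (act_left G k a1 b2) (act_right G k b1 a2)) (grgr_mult G k b1 b2))),
     one = (gr_one G k, \<lambda>g. gr_zero G k),
     zero = (gr_zero G k, \<lambda>g. gr_zero G k),
     add = (\<lambda>(a1, b1) (a2, b2). (gr_add G k a1 a2, grgr_add G k b1 b2))\<rparr>"

end

theory Submission
  imports Defs
begin

(* Send (alpha, beta) in D^1(k[G]) to the k[G]-valued function gamma on G + {o} with
   gamma(o) = alpha and gamma(g) = alpha + beta(g).  This map is injective and additive, and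
   it turns the product of D^1(k[G]) into the product
     (gamma1 gamma2)(x)(h) = sum_t gamma1(x)(t) gamma2(x t)(t^-1 h),
   where G acts on G + {o} by right translation fixing o: expanding
   (alpha1 + beta1(g)) (alpha2 + beta2(g -)) gives exactly the four terms of the D^1 product.
   This product is associative by the same computation as for k[G] itself
   (exchange the order of summation, then translate the summation variable), and it is
   biadditive with unit x |-> 1_G, so the ring axioms transfer to D^1(k[G]). *)

lemma (in abelian_monoid) fs_sum_eq_finsum:
  assumes "finite S" "S \<subseteq> A" "f \<in> A \<rightarrow> carrier G" "\<And>x. x \<in> A \<Longrightarrow> x \<notin> S \<Longrightarrow> f x = \<zero>"
  shows "fs_sum G A f = finsum G f S"
proof -
  have "{x \<in> A. f x \<noteq> \<zero>} \<subseteq> S"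
    using assms(4) by blast
  then show ?thesis
    unfolding fs_sum_def
    by (rule add.finprod_mono_neutral_cong_left[OF assms(1)]) (use assms in auto)
qed

lemma (in abelian_monoid) fs_sum_closed:
  "f \<in> A \<rightarrow> carrier G \<Longrightarrow> fs_sum G A f \<in> carrier G"
  unfolding fs_sum_def by (rule finsum_closed) auto

lemma (in abelian_monoid) fs_sum_cong:
  assumes "\<And>x. x \<in> A \<Longrightarrow> f x = g x" "g \<in> A \<rightarrow> carrier G"
  shows "fs_sum G A f = fs_sum G A g"
proof -
  have supp_eq: "{x \<in> A. f x \<noteq> \<zero>} = {x \<in> A. g x \<noteq> \<zero>}"
    using assms(1) by auto
  show ?thesis
    unfolding fs_sum_def supp_eq by (rule finsum_cong') (use assms in auto)
qed

lemma (in abelian_monoid) fs_sum_nonzeroE: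
  assumes "fs_sum G A f \<noteq> \<zero>"
  obtains x where "x \<in> A" "f x \<noteq> \<zero>"
proof -
  have "{x \<in> A. f x \<noteq> \<zero>} \<noteq> {}"
  proof
    assume "{x \<in> A. f x \<noteq> \<zero>} = {}"
    then show False
      using assms unfolding fs_sum_def by (metis finsum_empty)
  qed
  then show ?thesis
    using that by blast
qed

lemma (in abelian_monoid) finsum_swap:
  assumes "finite A" "finite B" "\<And>x y. x \<in> A \<Longrightarrow> y \<in> B \<Longrightarrow> f x y \<in> carrier G"
  shows "(\<Oplus>x\<in>A. \<Oplus>y\<in>B. f x y) = (\<Oplus>y\<in>B. \<Oplus>x\<in>A. f x y)"
  using assms
proof (induction A rule: finite_induct)
  case empty
  then show ?case by simp
next
  case (insert a A)
  have "(\<Oplus>x\<in>insert a A. \<Oplus>y\<in>B. f x y) = (\<Oplus>y\<in>B. f a y) \<oplus> (\<Oplus>x\<in>A. \<Oplus>y\<in>B. f x y)"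
    using insert by (intro finsum_insert) (auto intro!: finsum_closed)
  also have "\<dots> = (\<Oplus>y\<in>B. f a y) \<oplus> (\<Oplus>y\<in>B. \<Oplus>x\<in>A. f x y)"
    using insert by simp
  also have "\<dots> = (\<Oplus>y\<in>B. f a y \<oplus> (\<Oplus>x\<in>A. f x y))"
    using insert by (intro finsum_addf[symmetric]) (auto intro!: finsum_closed)
  also have "\<dots> = (\<Oplus>y\<in>B. \<Oplus>x\<in>insert a A. f x y)"
    using insert by (intro finsum_cong') (auto intro!: finsum_closed finsum_insert[symmetric])
  finally show ?case .
qed

locale group_ring_base = G: group G + R: ring k
  for G :: "('g, 'b) monoid_scheme" and k :: "('k, 'c) ring_scheme"
begin

abbreviation kG :: "('g \<Rightarrow> 'k) set"
  where "kG \<equiv> grp_ring_carrier G k"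

definition supp :: "('g \<Rightarrow> 'k) \<Rightarrow> 'g set"
  where "supp a = {x \<in> carrier G. a x \<noteq> \<zero>\<^bsub>k\<^esub>}"

lemma supp_subset_carrier: "supp a \<subseteq> carrier G"
  unfolding supp_def by auto

lemma grp_ring_carrier_closed: "a \<in> kG \<Longrightarrow> a x \<in> carrier k"
  by (cases "x \<in> carrier G") (auto simp: grp_ring_carrier_def)

lemma grp_ring_carrier_zero_outside: "a \<in> kG \<Longrightarrow> x \<notin> carrier G \<Longrightarrow> a x = \<zero>\<^bsub>k\<^esub>"
  by (simp add: grp_ring_carrier_def)

lemma grp_ring_carrier_finite_supp: "a \<in> kG \<Longrightarrow> finite (supp a)"
  by (simp add: grp_ring_carrier_def supp_def)

lemma grp_ring_carrierI:
  assumes "\<And>x. x \<in> carrier G \<Longrightarrow> a x \<in> carrier k" "\<And>x. x \<notin> carrier G \<Longrightarrow> a x = \<zero>\<^bsub>k\<^esub>"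
    and "finite (supp a)"
  shows "a \<in> kG"
  using assms by (auto simp: grp_ring_carrier_def supp_def)

lemma gr_add_apply: "h \<in> carrier G \<Longrightarrow> gr_add G k a b h = a h \<oplus>\<^bsub>k\<^esub> b h"
  by (simp add: gr_add_def)

lemma gr_add_closed:
  assumes "a \<in> kG" "b \<in> kG"
  shows "gr_add G k a b \<in> kG"
proof (rule grp_ring_carrierI)
  have "supp (gr_add G k a b) \<subseteq> supp a \<union> supp b"
    unfolding supp_def gr_add_def by auto
  moreover have "finite (supp a \<union> supp b)"
    using assms by (simp add: grp_ring_carrier_finite_supp)
  ultimately show "finite (supp (gr_add G k a b))"
    by (rule finite_subset)
qed (use assms in \<open>auto simp: gr_add_def grp_ring_carrier_closed\<close>)

lemma gr_add_assoc:
  "a \<in> kG \<Longrightarrow> b \<in> kG \<Longrightarrow> c \<in> kG \<Longrightarrow> gr_add G k (gr_add G k a b) c = gr_add G k a (gr_add G k b c)"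
  by (rule ext) (simp add: gr_add_def grp_ring_carrier_closed R.a_assoc)

lemma gr_add_comm: "a \<in> kG \<Longrightarrow> b \<in> kG \<Longrightarrow> gr_add G k a b = gr_add G k b a"
  by (rule ext) (simp add: gr_add_def grp_ring_carrier_closed R.a_comm)

lemma gr_zero_closed: "gr_zero G k \<in> kG"
  by (rule grp_ring_carrierI) (auto simp: gr_zero_def supp_def)

lemma gr_zero_add: "a \<in> kG \<Longrightarrow> gr_add G k (gr_zero G k) a = a"
  by (rule ext) (simp add: gr_add_def gr_zero_def grp_ring_carrier_closed
      grp_ring_carrier_zero_outside[of a])

lemma gr_add_zero: "a \<in> kG \<Longrightarrow> gr_add G k a (gr_zero G k) = a"
  by (rule ext) (simp add: gr_add_def gr_zero_def grp_ring_carrier_closed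
      grp_ring_carrier_zero_outside[of a])

definition gr_neg :: "('g \<Rightarrow> 'k) \<Rightarrow> 'g \<Rightarrow> 'k"
  where "gr_neg a = (\<lambda>x. if x \<in> carrier G then \<ominus>\<^bsub>k\<^esub> a x else \<zero>\<^bsub>k\<^esub>)"

lemma gr_neg_closed:
  assumes "a \<in> kG"
  shows "gr_neg a \<in> kG"
proof (rule grp_ring_carrierI)
  have "supp (gr_neg a) \<subseteq> supp a"
    using assms unfolding supp_def gr_neg_def by (auto simp: grp_ring_carrier_closed
        grp_ring_carrier_zero_outside[of a])
  then show "finite (supp (gr_neg a))"
    using grp_ring_carrier_finite_supp[OF assms] by (rule finite_subset)
qed (use assms in \<open>auto simp: gr_neg_def grp_ring_carrier_closed\<close>)

lemma gr_neg_add: "a \<in> kG \<Longrightarrow> gr_add G k (gr_neg a) a = gr_zero G k"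
  by (rule ext) (simp add: gr_add_def gr_neg_def gr_zero_def grp_ring_carrier_closed R.l_neg)

lemma gr_neg_zero: "gr_neg (gr_zero G k) = gr_zero G k"
  by (rule ext) (simp add: gr_neg_def gr_zero_def)

lemma gr_add_left_cancel:
  assumes "a \<in> kG" "b \<in> kG" "c \<in> kG" and eq: "gr_add G k a b = gr_add G k a c"
  shows "b = c"
proof -
  have "b = gr_add G k (gr_add G k (gr_neg a) a) b"
    using assms by (simp add: gr_neg_add gr_zero_add)
  also have "\<dots> = gr_add G k (gr_neg a) (gr_add G k a c)"
    using assms by (simp add: gr_add_assoc gr_neg_closed)
  also have "\<dots> = c"
    using assms by (simp add: gr_add_assoc[symmetric] gr_neg_closed gr_neg_add gr_zero_add)
  finally show ?thesis .
qed

lemma gr_one_closed: "gr_one G k \<in> kG"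
proof (rule grp_ring_carrierI)
  have "supp (gr_one G k) \<subseteq> {\<one>\<^bsub>G\<^esub>}"
    unfolding supp_def gr_one_def by auto
  then show "finite (supp (gr_one G k))"
    by (rule finite_subset) simp
qed (auto simp: gr_one_def)

definition twisted_conv :: "('g \<Rightarrow> 'k) \<Rightarrow> ('g \<Rightarrow> 'g \<Rightarrow> 'k) \<Rightarrow> 'g \<Rightarrow> 'k"
  where "twisted_conv a c = (\<lambda>h. if h \<in> carrier G
      then fs_sum k (carrier G) (\<lambda>t. a t \<otimes>\<^bsub>k\<^esub> c t (inv\<^bsub>G\<^esub> t \<otimes>\<^bsub>G\<^esub> h))
      else \<zero>\<^bsub>k\<^esub>)"

lemma twisted_conv_nonzeroE:
  assumes "twisted_conv a c h \<noteq> \<zero>\<^bsub>k\<^esub>"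
    and a: "a \<in> kG" and c: "\<And>t. t \<in> carrier G \<Longrightarrow> c t \<in> kG"
  obtains t where "h \<in> carrier G" "t \<in> supp a" "inv\<^bsub>G\<^esub> t \<otimes>\<^bsub>G\<^esub> h \<in> supp (c t)"
proof -
  have h: "h \<in> carrier G"
    using assms(1) unfolding twisted_conv_def by (auto split: if_splits)
  then have "fs_sum k (carrier G) (\<lambda>t. a t \<otimes>\<^bsub>k\<^esub> c t (inv\<^bsub>G\<^esub> t \<otimes>\<^bsub>G\<^esub> h)) \<noteq> \<zero>\<^bsub>k\<^esub>"
    using assms(1) by (simp add: twisted_conv_def)
  then obtain t where t: "t \<in> carrier G" "a t \<otimes>\<^bsub>k\<^esub> c t (inv\<^bsub>G\<^esub> t \<otimes>\<^bsub>G\<^esub> h) \<noteq> \<zero>\<^bsub>k\<^esub>"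
    by (rule R.fs_sum_nonzeroE)
  then have "a t \<noteq> \<zero>\<^bsub>k\<^esub>" "c t (inv\<^bsub>G\<^esub> t \<otimes>\<^bsub>G\<^esub> h) \<noteq> \<zero>\<^bsub>k\<^esub>"
    using a c by (auto simp: grp_ring_carrier_closed)
  then show ?thesis
    using that h t by (simp add: supp_def)
qed

lemma twisted_conv_supp:
  assumes a: "a \<in> kG" and c: "\<And>t. t \<in> carrier G \<Longrightarrow> c t \<in> kG"
  shows "supp (twisted_conv a c) \<subseteq> (\<Union>t\<in>supp a. (\<lambda>s. t \<otimes>\<^bsub>G\<^esub> s) ` supp (c t))"
proof
  fix h
  assume "h \<in> supp (twisted_conv a c)"
  then have "twisted_conv a c h \<noteq> \<zero>\<^bsub>k\<^esub>"
    by (simp add: supp_def)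
  then obtain t where h: "h \<in> carrier G" and t: "t \<in> supp a" "inv\<^bsub>G\<^esub> t \<otimes>\<^bsub>G\<^esub> h \<in> supp (c t)"
    using a c by (rule twisted_conv_nonzeroE)
  have "t \<in> carrier G"
    using t(1) supp_subset_carrier by blast
  then have "h = t \<otimes>\<^bsub>G\<^esub> (inv\<^bsub>G\<^esub> t \<otimes>\<^bsub>G\<^esub> h)"
    using h by (simp add: G.m_assoc[symmetric])
  with t show "h \<in> (\<Union>t\<in>supp a. (\<lambda>s. t \<otimes>\<^bsub>G\<^esub> s) ` supp (c t))"
    by blast
qed

lemma twisted_conv_closed:
  assumes a: "a \<in> kG" and c: "\<And>t. t \<in> carrier G \<Longrightarrow> c t \<in> kG"
  shows "twisted_conv a c \<in> kG"
proof (rule grp_ring_carrierI)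
  show "\<And>h. h \<in> carrier G \<Longrightarrow> twisted_conv a c h \<in> carrier k"
    using a c by (auto simp: twisted_conv_def grp_ring_carrier_closed intro!: R.fs_sum_closed)
  show "\<And>h. h \<notin> carrier G \<Longrightarrow> twisted_conv a c h = \<zero>\<^bsub>k\<^esub>"
    by (simp add: twisted_conv_def)
  have "finite (\<Union>t\<in>supp a. (\<lambda>s. t \<otimes>\<^bsub>G\<^esub> s) ` supp (c t))"
  proof (rule finite_UN_I)
    show "finite (supp a)"
      using a by (rule grp_ring_carrier_finite_supp)
    show "finite ((\<lambda>s. t \<otimes>\<^bsub>G\<^esub> s) ` supp (c t))" if "t \<in> supp a" for t
      using that c supp_subset_carrier by (simp add: grp_ring_carrier_finite_supp subset_iff)
  qed
  with twisted_conv_supp[OF a c] show "finite (supp (twisted_conv a c))"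
    by (rule finite_subset)
qed

lemma twisted_conv_eq_finsum:
  assumes a: "a \<in> kG" and c: "\<And>t. t \<in> carrier G \<Longrightarrow> c t \<in> kG"
    and S: "finite S" "supp a \<subseteq> S" "S \<subseteq> carrier G" and h: "h \<in> carrier G"
  shows "twisted_conv a c h = (\<Oplus>\<^bsub>k\<^esub>t\<in>S. a t \<otimes>\<^bsub>k\<^esub> c t (inv\<^bsub>G\<^esub> t \<otimes>\<^bsub>G\<^esub> h))"
proof -
  have "fs_sum k (carrier G) (\<lambda>t. a t \<otimes>\<^bsub>k\<^esub> c t (inv\<^bsub>G\<^esub> t \<otimes>\<^bsub>G\<^esub> h))
      = (\<Oplus>\<^bsub>k\<^esub>t\<in>S. a t \<otimes>\<^bsub>k\<^esub> c t (inv\<^bsub>G\<^esub> t \<otimes>\<^bsub>G\<^esub> h))"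
    by (rule R.fs_sum_eq_finsum[OF S(1,3)])
      (use a c S(2) h in \<open>auto simp: supp_def grp_ring_carrier_closed\<close>)
  then show ?thesis
    using h by (simp add: twisted_conv_def)
qed

lemma twisted_conv_cong:
  assumes "\<And>t. t \<in> carrier G \<Longrightarrow> a t = a' t"
    and "\<And>t s. t \<in> carrier G \<Longrightarrow> s \<in> carrier G \<Longrightarrow> c t s = c' t s"
    and "a' \<in> kG" "\<And>t. t \<in> carrier G \<Longrightarrow> c' t \<in> kG"
  shows "twisted_conv a c = twisted_conv a' c'"
proof (rule ext)
  fix h
  show "twisted_conv a c h = twisted_conv a' c' h"
  proof (cases "h \<in> carrier G")
    case True
    then show ?thesis
      unfolding twisted_conv_def using assms
      by (simp, intro R.fs_sum_cong) (auto simp: grp_ring_carrier_closed)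
  qed (simp add: twisted_conv_def)
qed

lemma twisted_conv_add_left:
  assumes a1: "a1 \<in> kG" and a2: "a2 \<in> kG" and c: "\<And>t. t \<in> carrier G \<Longrightarrow> c t \<in> kG"
  shows "twisted_conv (gr_add G k a1 a2) c = gr_add G k (twisted_conv a1 c) (twisted_conv a2 c)"
proof (rule ext)
  fix h
  show "twisted_conv (gr_add G k a1 a2) c h = gr_add G k (twisted_conv a1 c) (twisted_conv a2 c) h"
  proof (cases "h \<in> carrier G")
    case h: True
    define S where "S = supp a1 \<union> supp a2"
    have S: "finite S" "S \<subseteq> carrier G"
      using a1 a2 by (auto simp: S_def grp_ring_carrier_finite_supp supp_subset_carrier)
    have "supp (gr_add G k a1 a2) \<subseteq> S"
      unfolding S_def supp_def gr_add_def by auto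
    then have "twisted_conv (gr_add G k a1 a2) c h
        = (\<Oplus>\<^bsub>k\<^esub>t\<in>S. gr_add G k a1 a2 t \<otimes>\<^bsub>k\<^esub> c t (inv\<^bsub>G\<^esub> t \<otimes>\<^bsub>G\<^esub> h))"
      using S h a1 a2 c by (intro twisted_conv_eq_finsum gr_add_closed)
    also have "\<dots> = (\<Oplus>\<^bsub>k\<^esub>t\<in>S. a1 t \<otimes>\<^bsub>k\<^esub> c t (inv\<^bsub>G\<^esub> t \<otimes>\<^bsub>G\<^esub> h)
        \<oplus>\<^bsub>k\<^esub> a2 t \<otimes>\<^bsub>k\<^esub> c t (inv\<^bsub>G\<^esub> t \<otimes>\<^bsub>G\<^esub> h))"
      using S a1 a2 c by (intro R.finsum_cong') (auto simp: gr_add_apply R.l_distr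
          grp_ring_carrier_closed)
    also have "\<dots> = (\<Oplus>\<^bsub>k\<^esub>t\<in>S. a1 t \<otimes>\<^bsub>k\<^esub> c t (inv\<^bsub>G\<^esub> t \<otimes>\<^bsub>G\<^esub> h))
        \<oplus>\<^bsub>k\<^esub> (\<Oplus>\<^bsub>k\<^esub>t\<in>S. a2 t \<otimes>\<^bsub>k\<^esub> c t (inv\<^bsub>G\<^esub> t \<otimes>\<^bsub>G\<^esub> h))"
      using S h a1 a2 c by (intro R.finsum_addf) (auto simp: grp_ring_carrier_closed)
    also have "\<dots> = twisted_conv a1 c h \<oplus>\<^bsub>k\<^esub> twisted_conv a2 c h"
      using twisted_conv_eq_finsum[OF a1 c S(1) _ S(2) h] twisted_conv_eq_finsum[OF a2 c S(1) _
          S(2) h]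
      by (simp add: S_def)
    finally show ?thesis
      using h by (simp add: gr_add_apply)
  qed (simp add: twisted_conv_def gr_add_def)
qed

lemma twisted_conv_add_right:
  assumes a: "a \<in> kG"
    and c1: "\<And>t. t \<in> carrier G \<Longrightarrow> c1 t \<in> kG" and c2: "\<And>t. t \<in> carrier G \<Longrightarrow> c2 t \<in> kG"
  shows "twisted_conv a (\<lambda>t. gr_add G k (c1 t) (c2 t))
    = gr_add G k (twisted_conv a c1) (twisted_conv a c2)"
proof (rule ext)
  fix h
  show "twisted_conv a (\<lambda>t. gr_add G k (c1 t) (c2 t)) h
      = gr_add G k (twisted_conv a c1) (twisted_conv a c2) h"
  proof (cases "h \<in> carrier G")
    case h: True
    have S: "finite (supp a)" "supp a \<subseteq> carrier G"
      using a by (auto simp: grp_ring_carrier_finite_supp supp_subset_carrier)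
    have "twisted_conv a (\<lambda>t. gr_add G k (c1 t) (c2 t)) h
        = (\<Oplus>\<^bsub>k\<^esub>t\<in>supp a. a t \<otimes>\<^bsub>k\<^esub> gr_add G k (c1 t) (c2 t) (inv\<^bsub>G\<^esub> t \<otimes>\<^bsub>G\<^esub> h))"
      using S h a c1 c2 by (intro twisted_conv_eq_finsum gr_add_closed) auto
    also have "\<dots> = (\<Oplus>\<^bsub>k\<^esub>t\<in>supp a. a t \<otimes>\<^bsub>k\<^esub> c1 t (inv\<^bsub>G\<^esub> t \<otimes>\<^bsub>G\<^esub> h)
        \<oplus>\<^bsub>k\<^esub> a t \<otimes>\<^bsub>k\<^esub> c2 t (inv\<^bsub>G\<^esub> t \<otimes>\<^bsub>G\<^esub> h))"
      using S h a c1 c2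
      by (intro R.finsum_cong') (auto simp: gr_add_apply R.r_distr grp_ring_carrier_closed)
    also have "\<dots> = (\<Oplus>\<^bsub>k\<^esub>t\<in>supp a. a t \<otimes>\<^bsub>k\<^esub> c1 t (inv\<^bsub>G\<^esub> t \<otimes>\<^bsub>G\<^esub> h))
        \<oplus>\<^bsub>k\<^esub> (\<Oplus>\<^bsub>k\<^esub>t\<in>supp a. a t \<otimes>\<^bsub>k\<^esub> c2 t (inv\<^bsub>G\<^esub> t \<otimes>\<^bsub>G\<^esub> h))"
      using S h a c1 c2 by (intro R.finsum_addf) (auto simp: grp_ring_carrier_closed)
    also have "\<dots> = twisted_conv a c1 h \<oplus>\<^bsub>k\<^esub> twisted_conv a c2 h"
      using S h a c1 c2 by (simp add: twisted_conv_eq_finsum)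
    finally show ?thesis
      using h by (simp add: gr_add_apply)
  qed (simp add: twisted_conv_def gr_add_def)
qed

lemma twisted_conv_zero_left:
  assumes "\<And>t. t \<in> carrier G \<Longrightarrow> c t \<in> kG"
  shows "twisted_conv (gr_zero G k) c = gr_zero G k"
proof (rule ext, rule ccontr)
  fix h
  assume "twisted_conv (gr_zero G k) c h \<noteq> gr_zero G k h"
  then show False
    using twisted_conv_nonzeroE[OF _ gr_zero_closed assms]
    by (auto simp: gr_zero_def supp_def)
qed

lemma twisted_conv_one_left:
  assumes c: "\<And>t. t \<in> carrier G \<Longrightarrow> c t \<in> kG"
  shows "twisted_conv (gr_one G k) c = c \<one>\<^bsub>G\<^esub>"
proof (rule ext)
  fix h
  show "twisted_conv (gr_one G k) c h = c \<one>\<^bsub>G\<^esub> h"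
  proof (cases "h \<in> carrier G")
    case h: True
    have "supp (gr_one G k) \<subseteq> {\<one>\<^bsub>G\<^esub>}"
      unfolding supp_def gr_one_def by auto
    then have "twisted_conv (gr_one G k) c h
        = (\<Oplus>\<^bsub>k\<^esub>t\<in>{\<one>\<^bsub>G\<^esub>}. gr_one G k t \<otimes>\<^bsub>k\<^esub> c t (inv\<^bsub>G\<^esub> t \<otimes>\<^bsub>G\<^esub> h))"
      using h c by (intro twisted_conv_eq_finsum gr_one_closed) auto
    then show ?thesis
      using h c[of "\<one>\<^bsub>G\<^esub>"] by (simp add: gr_one_def grp_ring_carrier_closed)
  next
    case False
    then show ?thesis
      using c[of "\<one>\<^bsub>G\<^esub>"] by (simp add: twisted_conv_def grp_ring_carrier_zero_outside)
  qed
qed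

lemma twisted_conv_one_right:
  assumes a: "a \<in> kG"
  shows "twisted_conv a (\<lambda>_. gr_one G k) = a"
proof (rule ext)
  fix h
  show "twisted_conv a (\<lambda>_. gr_one G k) h = a h"
  proof (cases "h \<in> carrier G")
    case h: True
    have "fs_sum k (carrier G) (\<lambda>t. a t \<otimes>\<^bsub>k\<^esub> gr_one G k (inv\<^bsub>G\<^esub> t \<otimes>\<^bsub>G\<^esub> h))
        = (\<Oplus>\<^bsub>k\<^esub>t\<in>{h}. a t \<otimes>\<^bsub>k\<^esub> gr_one G k (inv\<^bsub>G\<^esub> t \<otimes>\<^bsub>G\<^esub> h))"
    proof (rule R.fs_sum_eq_finsum)
      fix t
      assume t: "t \<in> carrier G" "t \<notin> {h}"
      then have "inv\<^bsub>G\<^esub> t \<otimes>\<^bsub>G\<^esub> h \<noteq> \<one>\<^bsub>G\<^esub>"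
        using h by (metis G.inv_closed G.inv_comm G.inv_inv G.inv_equality singletonI)
      then show "a t \<otimes>\<^bsub>k\<^esub> gr_one G k (inv\<^bsub>G\<^esub> t \<otimes>\<^bsub>G\<^esub> h) = \<zero>\<^bsub>k\<^esub>"
        using a by (simp add: gr_one_def grp_ring_carrier_closed)
    qed (use h a in \<open>auto simp: gr_one_def grp_ring_carrier_closed\<close>)
    then show ?thesis
      using h a by (simp add: twisted_conv_def gr_one_def grp_ring_carrier_closed)
  qed (simp add: twisted_conv_def grp_ring_carrier_zero_outside[OF a])
qed

lemma twisted_conv_translate:
  assumes b: "b \<in> kG" and c: "\<And>s. s \<in> carrier G \<Longrightarrow> c s \<in> kG"
    and t: "t \<in> carrier G" and h: "h \<in> carrier G"
    and U: "finite U" "U \<subseteq> carrier G" "(\<lambda>u. t \<otimes>\<^bsub>G\<^esub> u) ` supp b \<subseteq> U"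
  shows "twisted_conv b (\<lambda>u. c (t \<otimes>\<^bsub>G\<^esub> u)) (inv\<^bsub>G\<^esub> t \<otimes>\<^bsub>G\<^esub> h)
    = (\<Oplus>\<^bsub>k\<^esub>s\<in>U. b (inv\<^bsub>G\<^esub> t \<otimes>\<^bsub>G\<^esub> s) \<otimes>\<^bsub>k\<^esub> c s (inv\<^bsub>G\<^esub> s \<otimes>\<^bsub>G\<^esub> h))"
proof -
  let ?V = "(\<lambda>s. inv\<^bsub>G\<^esub> t \<otimes>\<^bsub>G\<^esub> s) ` U"
  have "supp b \<subseteq> ?V"
  proof
    fix u
    assume u: "u \<in> supp b"
    then have "u \<in> carrier G"
      using supp_subset_carrier by blast
    then have "u = inv\<^bsub>G\<^esub> t \<otimes>\<^bsub>G\<^esub> (t \<otimes>\<^bsub>G\<^esub> u)"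
      using t by (simp add: G.m_assoc[symmetric])
    with u U(3) show "u \<in> ?V"
      by blast
  qed
  then have "twisted_conv b (\<lambda>u. c (t \<otimes>\<^bsub>G\<^esub> u)) (inv\<^bsub>G\<^esub> t \<otimes>\<^bsub>G\<^esub> h)
      = (\<Oplus>\<^bsub>k\<^esub>u\<in>?V. b u \<otimes>\<^bsub>k\<^esub> c (t \<otimes>\<^bsub>G\<^esub> u) (inv\<^bsub>G\<^esub> u \<otimes>\<^bsub>G\<^esub> (inv\<^bsub>G\<^esub> t \<otimes>\<^bsub>G\<^esub> h)))"
    using b c t h U by (intro twisted_conv_eq_finsum) auto
  also have "\<dots> = (\<Oplus>\<^bsub>k\<^esub>s\<in>U. b (inv\<^bsub>G\<^esub> t \<otimes>\<^bsub>G\<^esub> s)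
      \<otimes>\<^bsub>k\<^esub> c (t \<otimes>\<^bsub>G\<^esub> (inv\<^bsub>G\<^esub> t \<otimes>\<^bsub>G\<^esub> s)) (inv\<^bsub>G\<^esub> (inv\<^bsub>G\<^esub> t \<otimes>\<^bsub>G\<^esub> s) \<otimes>\<^bsub>G\<^esub> (inv\<^bsub>G\<^esub> t \<otimes>\<^bsub>G\<^esub> h)))"
  proof (rule R.finsum_reindex)
    show "inj_on (\<lambda>s. inv\<^bsub>G\<^esub> t \<otimes>\<^bsub>G\<^esub> s) U"
      using U(2) t by (auto intro!: inj_onI simp: subset_iff)
  qed (use b c t h U in \<open>auto simp: grp_ring_carrier_closed\<close>)
  also have "\<dots> = (\<Oplus>\<^bsub>k\<^esub>s\<in>U. b (inv\<^bsub>G\<^esub> t \<otimes>\<^bsub>G\<^esub> s) \<otimes>\<^bsub>k\<^esub> c s (inv\<^bsub>G\<^esub> s \<otimes>\<^bsub>G\<^esub> h))"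
  proof (rule R.finsum_cong')
    fix s
    assume "s \<in> U"
    then have s: "s \<in> carrier G"
      using U(2) by blast
    have "t \<otimes>\<^bsub>G\<^esub> (inv\<^bsub>G\<^esub> t \<otimes>\<^bsub>G\<^esub> s) = s"
      using s t by (simp add: G.m_assoc[symmetric])
    moreover have "inv\<^bsub>G\<^esub> (inv\<^bsub>G\<^esub> t \<otimes>\<^bsub>G\<^esub> s) \<otimes>\<^bsub>G\<^esub> (inv\<^bsub>G\<^esub> t \<otimes>\<^bsub>G\<^esub> h) = inv\<^bsub>G\<^esub> s \<otimes>\<^bsub>G\<^esub> h"
      using s t h by (simp add: G.inv_mult_group G.m_assoc) (simp add: G.m_assoc[symmetric])
    ultimately show "b (inv\<^bsub>G\<^esub> t \<otimes>\<^bsub>G\<^esub> s) \<otimes>\<^bsub>k\<^esub> c (t \<otimes>\<^bsub>G\<^esub> (inv\<^bsub>G\<^esub> t \<otimes>\<^bsub>G\<^esub> s))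
        (inv\<^bsub>G\<^esub> (inv\<^bsub>G\<^esub> t \<otimes>\<^bsub>G\<^esub> s) \<otimes>\<^bsub>G\<^esub> (inv\<^bsub>G\<^esub> t \<otimes>\<^bsub>G\<^esub> h))
      = b (inv\<^bsub>G\<^esub> t \<otimes>\<^bsub>G\<^esub> s) \<otimes>\<^bsub>k\<^esub> c s (inv\<^bsub>G\<^esub> s \<otimes>\<^bsub>G\<^esub> h)"
      by simp
  qed (use b c U(2) in \<open>auto simp: grp_ring_carrier_closed\<close>)
  finally show ?thesis .
qed

lemma twisted_conv_nested_eq_double_finsum:
  assumes A: "A \<in> kG"
    and B: "\<And>t. t \<in> carrier G \<Longrightarrow> B t \<in> kG" and C: "\<And>t. t \<in> carrier G \<Longrightarrow> C t \<in> kG"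
    and h: "h \<in> carrier G"
    and T: "finite T" "supp A \<subseteq> T" "T \<subseteq> carrier G"
    and U: "finite U" "supp (twisted_conv A B) \<subseteq> U" "U \<subseteq> carrier G"
  shows "twisted_conv (twisted_conv A B) C h = (\<Oplus>\<^bsub>k\<^esub>s\<in>U. \<Oplus>\<^bsub>k\<^esub>t\<in>T.
    (A t \<otimes>\<^bsub>k\<^esub> B t (inv\<^bsub>G\<^esub> t \<otimes>\<^bsub>G\<^esub> s)) \<otimes>\<^bsub>k\<^esub> C s (inv\<^bsub>G\<^esub> s \<otimes>\<^bsub>G\<^esub> h))"
proof -
  have "twisted_conv (twisted_conv A B) C h
      = (\<Oplus>\<^bsub>k\<^esub>s\<in>U. twisted_conv A B s \<otimes>\<^bsub>k\<^esub> C s (inv\<^bsub>G\<^esub> s \<otimes>\<^bsub>G\<^esub> h))"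
    using A B C U h by (intro twisted_conv_eq_finsum twisted_conv_closed)
  also have "\<dots> = (\<Oplus>\<^bsub>k\<^esub>s\<in>U. \<Oplus>\<^bsub>k\<^esub>t\<in>T.
      (A t \<otimes>\<^bsub>k\<^esub> B t (inv\<^bsub>G\<^esub> t \<otimes>\<^bsub>G\<^esub> s)) \<otimes>\<^bsub>k\<^esub> C s (inv\<^bsub>G\<^esub> s \<otimes>\<^bsub>G\<^esub> h))"
  proof (rule R.finsum_cong')
    fix s
    assume s: "s \<in> U"
    then have "twisted_conv A B s = (\<Oplus>\<^bsub>k\<^esub>t\<in>T. A t \<otimes>\<^bsub>k\<^esub> B t (inv\<^bsub>G\<^esub> t \<otimes>\<^bsub>G\<^esub> s))"
      using A B T U by (intro twisted_conv_eq_finsum) auto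
    then show "twisted_conv A B s \<otimes>\<^bsub>k\<^esub> C s (inv\<^bsub>G\<^esub> s \<otimes>\<^bsub>G\<^esub> h) = (\<Oplus>\<^bsub>k\<^esub>t\<in>T.
        (A t \<otimes>\<^bsub>k\<^esub> B t (inv\<^bsub>G\<^esub> t \<otimes>\<^bsub>G\<^esub> s)) \<otimes>\<^bsub>k\<^esub> C s (inv\<^bsub>G\<^esub> s \<otimes>\<^bsub>G\<^esub> h))"
      using s U T A B C by (simp add: R.finsum_ldistr grp_ring_carrier_closed subset_iff)
  next
    have "(A t \<otimes>\<^bsub>k\<^esub> B t (inv\<^bsub>G\<^esub> t \<otimes>\<^bsub>G\<^esub> s)) \<otimes>\<^bsub>k\<^esub> C s (inv\<^bsub>G\<^esub> s \<otimes>\<^bsub>G\<^esub> h) \<in> carrier k"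
      if "s \<in> U" "t \<in> T" for s t
      using that U T A B C by (intro R.m_closed grp_ring_carrier_closed) auto
    then show "(\<lambda>s. \<Oplus>\<^bsub>k\<^esub>t\<in>T. (A t \<otimes>\<^bsub>k\<^esub> B t (inv\<^bsub>G\<^esub> t \<otimes>\<^bsub>G\<^esub> s))
        \<otimes>\<^bsub>k\<^esub> C s (inv\<^bsub>G\<^esub> s \<otimes>\<^bsub>G\<^esub> h)) \<in> U \<rightarrow> carrier k"
      by (auto intro: R.finsum_closed)
  qed simp
  finally show ?thesis .
qed

lemma twisted_conv_assoc:
  assumes A: "A \<in> kG"
    and B: "\<And>t. t \<in> carrier G \<Longrightarrow> B t \<in> kG" and C: "\<And>t. t \<in> carrier G \<Longrightarrow> C t \<in> kG"
  shows "twisted_conv (twisted_conv A B) C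
    = twisted_conv A (\<lambda>t. twisted_conv (B t) (\<lambda>u. C (t \<otimes>\<^bsub>G\<^esub> u)))"
proof (rule ext)
  fix h
  show "twisted_conv (twisted_conv A B) C h
    = twisted_conv A (\<lambda>t. twisted_conv (B t) (\<lambda>u. C (t \<otimes>\<^bsub>G\<^esub> u))) h"
  proof (cases "h \<in> carrier G")
    case h: True
    define U where "U = (\<Union>t\<in>supp A. (\<lambda>s. t \<otimes>\<^bsub>G\<^esub> s) ` supp (B t))"
    have T: "finite (supp A)" "supp A \<subseteq> carrier G"
      using A by (auto simp: grp_ring_carrier_finite_supp supp_subset_carrier)
    have U: "finite U" "U \<subseteq> carrier G"
      using T B supp_subset_carrier by (auto simp: U_def grp_ring_carrier_finite_supp subset_iff)
    have BC: "\<And>t. t \<in> carrier G \<Longrightarrow> twisted_conv (B t) (\<lambda>u. C (t \<otimes>\<^bsub>G\<^esub> u)) \<in> kG"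
      using B C by (intro twisted_conv_closed) auto
    let ?f = "\<lambda>s t. (A t \<otimes>\<^bsub>k\<^esub> B t (inv\<^bsub>G\<^esub> t \<otimes>\<^bsub>G\<^esub> s)) \<otimes>\<^bsub>k\<^esub> C s (inv\<^bsub>G\<^esub> s \<otimes>\<^bsub>G\<^esub> h)"
    have f_closed: "?f s t \<in> carrier k" if "s \<in> U" "t \<in> supp A" for s t
      using that U T A B C by (intro R.m_closed grp_ring_carrier_closed) auto
    have "twisted_conv (twisted_conv A B) C h = (\<Oplus>\<^bsub>k\<^esub>s\<in>U. \<Oplus>\<^bsub>k\<^esub>t\<in>supp A. ?f s t)"
      using A B C h T U twisted_conv_supp[OF A B]
      by (intro twisted_conv_nested_eq_double_finsum) (auto simp: U_def)
    also have "\<dots> = (\<Oplus>\<^bsub>k\<^esub>t\<in>supp A. \<Oplus>\<^bsub>k\<^esub>s\<in>U. ?f s t)"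
      by (rule R.finsum_swap[OF U(1) T(1) f_closed])
    also have "\<dots> = (\<Oplus>\<^bsub>k\<^esub>t\<in>supp A.
        A t \<otimes>\<^bsub>k\<^esub> twisted_conv (B t) (\<lambda>u. C (t \<otimes>\<^bsub>G\<^esub> u)) (inv\<^bsub>G\<^esub> t \<otimes>\<^bsub>G\<^esub> h))"
    proof (rule R.finsum_cong')
      fix t
      assume t: "t \<in> supp A"
      then have tG: "t \<in> carrier G"
        using T by blast
      have "twisted_conv (B t) (\<lambda>u. C (t \<otimes>\<^bsub>G\<^esub> u)) (inv\<^bsub>G\<^esub> t \<otimes>\<^bsub>G\<^esub> h)
          = (\<Oplus>\<^bsub>k\<^esub>s\<in>U. B t (inv\<^bsub>G\<^esub> t \<otimes>\<^bsub>G\<^esub> s) \<otimes>\<^bsub>k\<^esub> C s (inv\<^bsub>G\<^esub> s \<otimes>\<^bsub>G\<^esub> h))"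
        using t tG B C h U by (intro twisted_conv_translate) (auto simp: U_def)
      then show "(\<Oplus>\<^bsub>k\<^esub>s\<in>U. ?f s t)
          = A t \<otimes>\<^bsub>k\<^esub> twisted_conv (B t) (\<lambda>u. C (t \<otimes>\<^bsub>G\<^esub> u)) (inv\<^bsub>G\<^esub> t \<otimes>\<^bsub>G\<^esub> h)"
        using tG U A B C
        by (simp add: R.finsum_rdistr R.m_assoc grp_ring_carrier_closed subset_iff cong:
            R.finsum_cong)
    qed (use A BC T in \<open>auto simp: grp_ring_carrier_closed\<close>)
    also have "\<dots> = twisted_conv A (\<lambda>t. twisted_conv (B t) (\<lambda>u. C (t \<otimes>\<^bsub>G\<^esub> u))) h"
      using A BC T h by (intro twisted_conv_eq_finsum[symmetric]) auto
    finally show ?thesis .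
  qed (simp add: twisted_conv_def)
qed

abbreviation kGG :: "('g \<Rightarrow> 'g \<Rightarrow> 'k) set"
  where "kGG \<equiv> grgr_carrier G k"

definition grgr_supp :: "('g \<Rightarrow> 'g \<Rightarrow> 'k) \<Rightarrow> 'g set"
  where "grgr_supp \<beta> = {g \<in> carrier G. \<beta> g \<noteq> gr_zero G k}"

lemma grgr_carrier_closed: "\<beta> \<in> kGG \<Longrightarrow> \<beta> g \<in> kG"
  by (cases "g \<in> carrier G") (auto simp: grgr_carrier_def gr_zero_closed)

lemma grgr_carrier_zero_outside: "\<beta> \<in> kGG \<Longrightarrow> g \<notin> carrier G \<Longrightarrow> \<beta> g = gr_zero G k"
  by (simp add: grgr_carrier_def)

lemma grgr_carrier_finite_supp: "\<beta> \<in> kGG \<Longrightarrow> finite (grgr_supp \<beta>)"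
  by (simp add: grgr_carrier_def grgr_supp_def)

lemma grgr_carrierI:
  assumes "\<And>g. g \<in> carrier G \<Longrightarrow> \<beta> g \<in> kG" "\<And>g. g \<notin> carrier G \<Longrightarrow> \<beta> g = gr_zero G k"
    and "finite (grgr_supp \<beta>)"
  shows "\<beta> \<in> kGG"
  using assms by (auto simp: grgr_carrier_def grgr_supp_def)

lemma grgr_add_closed:
  assumes "\<beta> \<in> kGG" "\<gamma> \<in> kGG"
  shows "grgr_add G k \<beta> \<gamma> \<in> kGG"
proof (rule grgr_carrierI)
  have "grgr_supp (grgr_add G k \<beta> \<gamma>) \<subseteq> grgr_supp \<beta> \<union> grgr_supp \<gamma>"
    using assms unfolding grgr_supp_def grgr_add_def
    by (auto simp: gr_add_zero gr_zero_closed)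
  moreover have "finite (grgr_supp \<beta> \<union> grgr_supp \<gamma>)"
    using assms by (simp add: grgr_carrier_finite_supp)
  ultimately show "finite (grgr_supp (grgr_add G k \<beta> \<gamma>))"
    by (rule finite_subset)
qed (use assms in \<open>auto simp: grgr_add_def grgr_carrier_closed gr_add_closed\<close>)

lemma grgr_add_assoc:
  "\<beta> \<in> kGG \<Longrightarrow> \<gamma> \<in> kGG \<Longrightarrow> \<delta> \<in> kGG
    \<Longrightarrow> grgr_add G k (grgr_add G k \<beta> \<gamma>) \<delta> = grgr_add G k \<beta> (grgr_add G k \<gamma> \<delta>)"
  by (rule ext) (simp add: grgr_add_def grgr_carrier_closed gr_add_assoc)

lemma grgr_add_comm: "\<beta> \<in> kGG \<Longrightarrow> \<gamma> \<in> kGG \<Longrightarrow> grgr_add G k \<beta> \<gamma> = grgr_add G k \<gamma> \<beta>"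
  by (rule ext) (simp add: grgr_add_def grgr_carrier_closed gr_add_comm)

lemma grgr_zero_closed: "(\<lambda>g. gr_zero G k) \<in> kGG"
  by (rule grgr_carrierI) (auto simp: grgr_supp_def gr_zero_closed)

lemma grgr_zero_add: "\<beta> \<in> kGG \<Longrightarrow> grgr_add G k (\<lambda>g. gr_zero G k) \<beta> = \<beta>"
  by (rule ext)
    (simp add: grgr_add_def grgr_carrier_closed gr_zero_add grgr_carrier_zero_outside[of \<beta>])

definition grgr_neg :: "('g \<Rightarrow> 'g \<Rightarrow> 'k) \<Rightarrow> 'g \<Rightarrow> 'g \<Rightarrow> 'k"
  where "grgr_neg \<beta> = (\<lambda>g. if g \<in> carrier G then gr_neg (\<beta> g) else gr_zero G k)"

lemma grgr_neg_closed:
  assumes "\<beta> \<in> kGG"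
  shows "grgr_neg \<beta> \<in> kGG"
proof (rule grgr_carrierI)
  have "grgr_supp (grgr_neg \<beta>) \<subseteq> grgr_supp \<beta>"
    unfolding grgr_supp_def grgr_neg_def by (auto simp: gr_neg_zero)
  then show "finite (grgr_supp (grgr_neg \<beta>))"
    using grgr_carrier_finite_supp[OF assms] by (rule finite_subset)
qed (use assms in \<open>auto simp: grgr_neg_def grgr_carrier_closed gr_neg_closed\<close>)

lemma grgr_neg_add: "\<beta> \<in> kGG \<Longrightarrow> grgr_add G k (grgr_neg \<beta>) \<beta> = (\<lambda>g. gr_zero G k)"
  by (rule ext) (simp add: grgr_add_def grgr_neg_def grgr_carrier_closed gr_neg_add)

lemma D1_carrier: "carrier (D1 G k) = kG \<times> kGG"
  by (simp add: D1_def)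

lemma D1_add: "(a1, b1) \<oplus>\<^bsub>D1 G k\<^esub> (a2, b2) = (gr_add G k a1 a2, grgr_add G k b1 b2)"
  by (simp add: D1_def)

lemma D1_zero: "\<zero>\<^bsub>D1 G k\<^esub> = (gr_zero G k, \<lambda>g. gr_zero G k)"
  by (simp add: D1_def)

lemma D1_one: "\<one>\<^bsub>D1 G k\<^esub> = (gr_one G k, \<lambda>g. gr_zero G k)"
  by (simp add: D1_def)

lemma D1_mult: "(a1, b1) \<otimes>\<^bsub>D1 G k\<^esub> (a2, b2) = (gr_mult G k a1 a2,
    grgr_add G k (grgr_add G k (act_left G k a1 b2) (act_right G k b1 a2)) (grgr_mult G k b1 b2))"
  by (simp add: D1_def)

lemma D1_abelian_group: "abelian_group (D1 G k)"
proof (rule abelian_groupI)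
  fix x y z
  assume "x \<in> carrier (D1 G k)" "y \<in> carrier (D1 G k)" "z \<in> carrier (D1 G k)"
  then show "x \<oplus>\<^bsub>D1 G k\<^esub> y \<oplus>\<^bsub>D1 G k\<^esub> z = x \<oplus>\<^bsub>D1 G k\<^esub> (y \<oplus>\<^bsub>D1 G k\<^esub> z)"
    by (cases x, cases y, cases z) (simp add: D1_carrier D1_add gr_add_assoc grgr_add_assoc)
next
  fix x y
  assume "x \<in> carrier (D1 G k)" "y \<in> carrier (D1 G k)"
  then show "x \<oplus>\<^bsub>D1 G k\<^esub> y \<in> carrier (D1 G k)" "x \<oplus>\<^bsub>D1 G k\<^esub> y = y \<oplus>\<^bsub>D1 G k\<^esub> x"
    by (cases x, cases y, simp add: D1_carrier D1_add gr_add_closed grgr_add_closed gr_add_comm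
        grgr_add_comm)+
next
  fix x
  assume x: "x \<in> carrier (D1 G k)"
  then show "\<zero>\<^bsub>D1 G k\<^esub> \<oplus>\<^bsub>D1 G k\<^esub> x = x"
    by (cases x) (simp add: D1_carrier D1_add D1_zero gr_zero_add grgr_zero_add)
  obtain a b where ab: "x = (a, b)"
    by (cases x)
  then have "(gr_neg a, grgr_neg b) \<in> carrier (D1 G k)"
    "(gr_neg a, grgr_neg b) \<oplus>\<^bsub>D1 G k\<^esub> x = \<zero>\<^bsub>D1 G k\<^esub>"
    using x by (simp_all add: D1_carrier D1_add D1_zero gr_neg_closed grgr_neg_closed
        gr_neg_add grgr_neg_add)
  then show "\<exists>y\<in>carrier (D1 G k). y \<oplus>\<^bsub>D1 G k\<^esub> x = \<zero>\<^bsub>D1 G k\<^esub>"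
    by blast
qed (simp add: D1_carrier D1_zero gr_zero_closed grgr_zero_closed)

lemma gr_mult_eq_twisted_conv: "gr_mult G k a b = twisted_conv a (\<lambda>_. b)"
  by (simp add: gr_mult_def twisted_conv_def)

lemma act_left_eq_twisted_conv:
  "act_left G k a \<beta> g = (if g \<in> carrier G then twisted_conv a (\<lambda>t. \<beta> (g \<otimes>\<^bsub>G\<^esub> t)) else gr_zero G k)"
  by (rule ext) (simp add: act_left_def twisted_conv_def gr_zero_def)

lemma act_right_eq_twisted_conv:
  "act_right G k \<beta> a g = (if g \<in> carrier G then twisted_conv (\<beta> g) (\<lambda>_. a) else gr_zero G k)"
  by (rule ext) (simp add: act_right_def twisted_conv_def gr_zero_def)

lemma grgr_mult_eq_twisted_conv:
  "grgr_mult G k \<beta> \<gamma> g = (if g \<in> carrier G then twisted_conv (\<beta> g) (\<lambda>t. \<gamma> (g \<otimes>\<^bsub>G\<^esub> t)) else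
      gr_zero G k)"
  by (rule ext) (simp add: grgr_mult_def twisted_conv_def gr_zero_def)

lemma gr_mult_closed: "a \<in> kG \<Longrightarrow> b \<in> kG \<Longrightarrow> gr_mult G k a b \<in> kG"
  unfolding gr_mult_eq_twisted_conv by (rule twisted_conv_closed)

lemma act_left_closed:
  assumes a: "a \<in> kG" and \<beta>: "\<beta> \<in> kGG"
  shows "act_left G k a \<beta> \<in> kGG"
proof (rule grgr_carrierI)
  have "grgr_supp (act_left G k a \<beta>) \<subseteq> (\<lambda>(s, t). s \<otimes>\<^bsub>G\<^esub> inv\<^bsub>G\<^esub> t) ` (grgr_supp \<beta> \<times> supp a)"
  proof
    fix g
    assume "g \<in> grgr_supp (act_left G k a \<beta>)"
    then obtain h where g: "g \<in> carrier G" and "twisted_conv a (\<lambda>t. \<beta> (g \<otimes>\<^bsub>G\<^esub> t)) h \<noteq> \<zero>\<^bsub>k\<^esub>"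
      unfolding grgr_supp_def by (auto simp: act_left_eq_twisted_conv gr_zero_def fun_eq_iff)
    then obtain t where t: "t \<in> supp a" "inv\<^bsub>G\<^esub> t \<otimes>\<^bsub>G\<^esub> h \<in> supp (\<beta> (g \<otimes>\<^bsub>G\<^esub> t))"
      using a \<beta> grgr_carrier_closed by (metis twisted_conv_nonzeroE)
    then have tG: "t \<in> carrier G"
      using supp_subset_carrier by blast
    have "g \<otimes>\<^bsub>G\<^esub> t \<in> grgr_supp \<beta>"
      using t g tG by (auto simp: grgr_supp_def supp_def gr_zero_def)
    moreover have "g = (g \<otimes>\<^bsub>G\<^esub> t) \<otimes>\<^bsub>G\<^esub> inv\<^bsub>G\<^esub> t"
      using g tG by (simp add: G.m_assoc)
    ultimately show "g \<in> (\<lambda>(s, t). s \<otimes>\<^bsub>G\<^esub> inv\<^bsub>G\<^esub> t) ` (grgr_supp \<beta> \<times> supp a)"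
      using t(1) by force
  qed
  moreover have "finite ((\<lambda>(s, t). s \<otimes>\<^bsub>G\<^esub> inv\<^bsub>G\<^esub> t) ` (grgr_supp \<beta> \<times> supp a))"
    using grgr_carrier_finite_supp[OF \<beta>] grp_ring_carrier_finite_supp[OF a] by simp
  ultimately show "finite (grgr_supp (act_left G k a \<beta>))"
    by (rule finite_subset)
qed (use a \<beta> in \<open>auto simp: act_left_eq_twisted_conv grgr_carrier_closed twisted_conv_closed\<close>)

lemma act_right_closed:
  assumes a: "a \<in> kG" and \<beta>: "\<beta> \<in> kGG"
  shows "act_right G k \<beta> a \<in> kGG"
proof (rule grgr_carrierI)
  have "grgr_supp (act_right G k \<beta> a) \<subseteq> grgr_supp \<beta>"
    unfolding grgr_supp_def using a by (auto simp: act_right_eq_twisted_conv twisted_conv_zero_left)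
  then show "finite (grgr_supp (act_right G k \<beta> a))"
    using grgr_carrier_finite_supp[OF \<beta>] by (rule finite_subset)
qed (use a \<beta> in \<open>auto simp: act_right_eq_twisted_conv grgr_carrier_closed twisted_conv_closed\<close>)

lemma grgr_mult_closed:
  assumes \<beta>: "\<beta> \<in> kGG" and \<gamma>: "\<gamma> \<in> kGG"
  shows "grgr_mult G k \<beta> \<gamma> \<in> kGG"
proof (rule grgr_carrierI)
  have "grgr_supp (grgr_mult G k \<beta> \<gamma>) \<subseteq> grgr_supp \<beta>"
    unfolding grgr_supp_def using \<gamma>
    by (auto simp: grgr_mult_eq_twisted_conv twisted_conv_zero_left grgr_carrier_closed)
  then show "finite (grgr_supp (grgr_mult G k \<beta> \<gamma>))"
    using grgr_carrier_finite_supp[OF \<beta>] by (rule finite_subset)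
qed (use \<beta> \<gamma> in \<open>auto simp: grgr_mult_eq_twisted_conv grgr_carrier_closed twisted_conv_closed\<close>)

lemma D1_mult_closed:
  "x \<in> carrier (D1 G k) \<Longrightarrow> y \<in> carrier (D1 G k) \<Longrightarrow> x \<otimes>\<^bsub>D1 G k\<^esub> y \<in> carrier (D1 G k)"
  by (cases x, cases y) (simp add: D1_carrier D1_mult gr_mult_closed grgr_add_closed
      act_left_closed act_right_closed grgr_mult_closed)

definition pointed :: "'g option set"
  where "pointed = insert None (Some ` carrier G)"

definition pointed_shift :: "'g option \<Rightarrow> 'g \<Rightarrow> 'g option"
  where "pointed_shift x t = map_option (\<lambda>g. g \<otimes>\<^bsub>G\<^esub> t) x"

lemma mem_pointed [simp]: "None \<in> pointed" "Some g \<in> pointed \<longleftrightarrow> g \<in> carrier G"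
  by (auto simp: pointed_def)

lemma pointed_shift_closed: "x \<in> pointed \<Longrightarrow> t \<in> carrier G \<Longrightarrow> pointed_shift x t \<in> pointed"
  by (cases x) (auto simp: pointed_shift_def)

lemma pointed_shift_shift:
  "x \<in> pointed \<Longrightarrow> t \<in> carrier G \<Longrightarrow> u \<in> carrier G
    \<Longrightarrow> pointed_shift (pointed_shift x t) u = pointed_shift x (t \<otimes>\<^bsub>G\<^esub> u)"
  by (cases x) (auto simp: pointed_shift_def G.m_assoc)

lemma pointed_shift_one: "x \<in> pointed \<Longrightarrow> pointed_shift x \<one>\<^bsub>G\<^esub> = x"
  by (cases x) (auto simp: pointed_shift_def)

definition pfun_carrier :: "('g option \<Rightarrow> 'g \<Rightarrow> 'k) set"
  where "pfun_carrier = {F. (\<forall>x. F x \<in> kG) \<and> (\<forall>x. x \<notin> pointed \<longrightarrow> F x = gr_zero G k)}"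

definition pfun_add :: "('g option \<Rightarrow> 'g \<Rightarrow> 'k) \<Rightarrow> ('g option \<Rightarrow> 'g \<Rightarrow> 'k) \<Rightarrow> 'g option \<Rightarrow> 'g \<Rightarrow> 'k"
  where "pfun_add F1 F2 = (\<lambda>x. if x \<in> pointed then gr_add G k (F1 x) (F2 x) else gr_zero G k)"

definition pfun_mult :: "('g option \<Rightarrow> 'g \<Rightarrow> 'k) \<Rightarrow> ('g option \<Rightarrow> 'g \<Rightarrow> 'k) \<Rightarrow> 'g option \<Rightarrow> 'g \<Rightarrow> 'k"
  where "pfun_mult F1 F2 = (\<lambda>x. if x \<in> pointed
    then twisted_conv (F1 x) (\<lambda>t. F2 (pointed_shift x t)) else gr_zero G k)"

definition pfun_one :: "'g option \<Rightarrow> 'g \<Rightarrow> 'k"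
  where "pfun_one = (\<lambda>x. if x \<in> pointed then gr_one G k else gr_zero G k)"

lemma pfun_carrier_closed: "F \<in> pfun_carrier \<Longrightarrow> F x \<in> kG"
  by (simp add: pfun_carrier_def)

lemma pfun_carrier_zero_outside: "F \<in> pfun_carrier \<Longrightarrow> x \<notin> pointed \<Longrightarrow> F x = gr_zero G k"
  by (simp add: pfun_carrier_def)

lemma pfun_mult_closed: "F1 \<in> pfun_carrier \<Longrightarrow> F2 \<in> pfun_carrier \<Longrightarrow> pfun_mult F1 F2 \<in> pfun_carrier"
  unfolding pfun_carrier_def pfun_mult_def by (auto intro!: twisted_conv_closed simp:
      gr_zero_closed)

lemma pfun_mult_assoc:
  assumes F1: "F1 \<in> pfun_carrier" and F2: "F2 \<in> pfun_carrier" and F3: "F3 \<in> pfun_carrier"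
  shows "pfun_mult (pfun_mult F1 F2) F3 = pfun_mult F1 (pfun_mult F2 F3)"
proof (rule ext)
  fix x
  show "pfun_mult (pfun_mult F1 F2) F3 x = pfun_mult F1 (pfun_mult F2 F3) x"
  proof (cases "x \<in> pointed")
    case x: True
    have "pfun_mult (pfun_mult F1 F2) F3 x
        = twisted_conv (twisted_conv (F1 x) (\<lambda>t. F2 (pointed_shift x t))) (\<lambda>s. F3 (pointed_shift
            x s))"
      using x by (simp add: pfun_mult_def)
    also have "\<dots> = twisted_conv (F1 x)
        (\<lambda>t. twisted_conv (F2 (pointed_shift x t)) (\<lambda>u. F3 (pointed_shift x (t \<otimes>\<^bsub>G\<^esub> u))))"
      using F1 F2 F3 by (intro twisted_conv_assoc) (auto simp: pfun_carrier_closed)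
    also have "\<dots> = twisted_conv (F1 x) (\<lambda>t. pfun_mult F2 F3 (pointed_shift x t))"
    proof (rule twisted_conv_cong)
      fix t
      assume t: "t \<in> carrier G"
      have "twisted_conv (F2 (pointed_shift x t)) (\<lambda>u. F3 (pointed_shift x (t \<otimes>\<^bsub>G\<^esub> u)))
          = twisted_conv (F2 (pointed_shift x t)) (\<lambda>u. F3 (pointed_shift (pointed_shift x t) u))"
        using x t F2 F3 by (intro twisted_conv_cong) (auto simp: pfun_carrier_closed
            pointed_shift_shift)
      then show "\<And>s. twisted_conv (F2 (pointed_shift x t)) (\<lambda>u. F3 (pointed_shift x (t \<otimes>\<^bsub>G\<^esub> u))) s
          = pfun_mult F2 F3 (pointed_shift x t) s"
        using pointed_shift_closed[OF x t] by (simp add: pfun_mult_def)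
      show "pfun_mult F2 F3 (pointed_shift x t) \<in> kG"
        using pfun_mult_closed[OF F2 F3] by (rule pfun_carrier_closed)
    qed (use F1 in \<open>simp_all add: pfun_carrier_closed\<close>)
    also have "\<dots> = pfun_mult F1 (pfun_mult F2 F3) x"
      using x by (simp add: pfun_mult_def)
    finally show ?thesis .
  qed (simp add: pfun_mult_def)
qed

lemma pfun_mult_add_left:
  assumes "F1 \<in> pfun_carrier" "F2 \<in> pfun_carrier" "F3 \<in> pfun_carrier"
  shows "pfun_mult (pfun_add F1 F2) F3 = pfun_add (pfun_mult F1 F3) (pfun_mult F2 F3)"
  using assms
  by (auto simp: fun_eq_iff pfun_mult_def pfun_add_def twisted_conv_add_left pfun_carrier_closed)

lemma pfun_mult_add_right:
  assumes F1: "F1 \<in> pfun_carrier" and F2: "F2 \<in> pfun_carrier" and F3: "F3 \<in> pfun_carrier"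
  shows "pfun_mult F1 (pfun_add F2 F3) = pfun_add (pfun_mult F1 F2) (pfun_mult F1 F3)"
proof (rule ext)
  fix x
  show "pfun_mult F1 (pfun_add F2 F3) x = pfun_add (pfun_mult F1 F2) (pfun_mult F1 F3) x"
  proof (cases "x \<in> pointed")
    case x: True
    have "twisted_conv (F1 x) (\<lambda>t. pfun_add F2 F3 (pointed_shift x t))
        = twisted_conv (F1 x) (\<lambda>t. gr_add G k (F2 (pointed_shift x t)) (F3 (pointed_shift x t)))"
      using x F1 F2 F3 by (intro twisted_conv_cong)
        (auto simp: pfun_add_def pointed_shift_closed pfun_carrier_closed gr_add_closed)
    also have "\<dots> = gr_add G k (twisted_conv (F1 x) (\<lambda>t. F2 (pointed_shift x t)))
        (twisted_conv (F1 x) (\<lambda>t. F3 (pointed_shift x t)))"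
      using F1 F2 F3 by (intro twisted_conv_add_right) (auto simp: pfun_carrier_closed)
    finally show ?thesis
      using x by (simp add: pfun_mult_def pfun_add_def)
  qed (simp add: pfun_mult_def pfun_add_def)
qed

lemma pfun_mult_one_left:
  assumes F: "F \<in> pfun_carrier"
  shows "pfun_mult pfun_one F = F"
proof (rule ext)
  fix x
  show "pfun_mult pfun_one F x = F x"
  proof (cases "x \<in> pointed")
    case True
    then show ?thesis
      using F twisted_conv_one_left[of "\<lambda>t. F (pointed_shift x t)"]
      by (simp add: pfun_mult_def pfun_one_def pfun_carrier_closed pointed_shift_one)
  qed (simp add: pfun_mult_def F pfun_carrier_zero_outside)
qed

lemma pfun_mult_one_right:
  assumes F: "F \<in> pfun_carrier"
  shows "pfun_mult F pfun_one = F"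
proof (rule ext)
  fix x
  show "pfun_mult F pfun_one x = F x"
  proof (cases "x \<in> pointed")
    case x: True
    have "twisted_conv (F x) (\<lambda>t. pfun_one (pointed_shift x t)) = twisted_conv (F x) (\<lambda>_. gr_one
        G k)"
      using x F by (intro twisted_conv_cong)
        (auto simp: pfun_one_def pointed_shift_closed pfun_carrier_closed gr_one_closed)
    then show ?thesis
      using x F by (simp add: pfun_mult_def twisted_conv_one_right pfun_carrier_closed)
  qed (simp add: pfun_mult_def F pfun_carrier_zero_outside)
qed

definition D1_to_pfun :: "('g \<Rightarrow> 'k) \<times> ('g \<Rightarrow> 'g \<Rightarrow> 'k) \<Rightarrow> 'g option \<Rightarrow> 'g \<Rightarrow> 'k"
  where "D1_to_pfun p = (\<lambda>x. case x of
      None \<Rightarrow> fst p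
    | Some g \<Rightarrow> if g \<in> carrier G then gr_add G k (fst p) (snd p g) else gr_zero G k)"

lemma D1_to_pfun_closed: "p \<in> carrier (D1 G k) \<Longrightarrow> D1_to_pfun p \<in> pfun_carrier"
  unfolding pfun_carrier_def D1_to_pfun_def D1_carrier pointed_def
  by (auto simp: gr_add_closed grgr_carrier_closed gr_zero_closed split: option.splits)

lemma D1_to_pfun_one: "D1_to_pfun \<one>\<^bsub>D1 G k\<^esub> = pfun_one"
  by (auto simp: fun_eq_iff D1_to_pfun_def pfun_one_def D1_one gr_add_zero gr_one_closed
      split: option.splits)

lemma D1_to_pfun_inj:
  assumes p: "p \<in> carrier (D1 G k)" and q: "q \<in> carrier (D1 G k)"
    and eq: "D1_to_pfun p = D1_to_pfun q"
  shows "p = q"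
proof -
  obtain a1 b1 a2 b2 where pq: "p = (a1, b1)" "q = (a2, b2)"
    by (cases p, cases q)
  have c: "a1 \<in> kG" "a2 \<in> kG" "b1 \<in> kGG" "b2 \<in> kGG"
    using p q pq by (auto simp: D1_carrier)
  have a: "a1 = a2"
    using fun_cong[OF eq, of None] by (simp add: D1_to_pfun_def pq)
  have "b1 g = b2 g" for g
  proof (cases "g \<in> carrier G")
    case True
    then have "gr_add G k a1 (b1 g) = gr_add G k a1 (b2 g)"
      using fun_cong[OF eq, of "Some g"] a by (simp add: D1_to_pfun_def pq)
    then show ?thesis
      by (rule gr_add_left_cancel[rotated 3]) (use c in \<open>auto simp: grgr_carrier_closed\<close>)
  qed (use c in \<open>simp add: grgr_carrier_zero_outside\<close>)
  then show ?thesis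
    using a pq by auto
qed

lemma D1_to_pfun_add:
  assumes "p \<in> carrier (D1 G k)" "q \<in> carrier (D1 G k)"
  shows "D1_to_pfun (p \<oplus>\<^bsub>D1 G k\<^esub> q) = pfun_add (D1_to_pfun p) (D1_to_pfun q)"
  using assms
  by (cases p, cases q) (auto simp: fun_eq_iff D1_carrier D1_add D1_to_pfun_def pfun_add_def
      grgr_add_def gr_add_def grp_ring_carrier_closed grgr_carrier_closed R.a_ac split:
          option.splits)

lemma D1_to_pfun_mult_Some:
  assumes c: "a1 \<in> kG" "a2 \<in> kG" "b1 \<in> kGG" "b2 \<in> kGG" and g: "g \<in> carrier G"
  shows "D1_to_pfun ((a1, b1) \<otimes>\<^bsub>D1 G k\<^esub> (a2, b2)) (Some g)
    = pfun_mult (D1_to_pfun (a1, b1)) (D1_to_pfun (a2, b2)) (Some g)"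
proof -
  have b: "\<And>g. b1 g \<in> kG" "\<And>g. b2 g \<in> kG"
    using c by (auto simp: grgr_carrier_closed)
  have "pfun_mult (D1_to_pfun (a1, b1)) (D1_to_pfun (a2, b2)) (Some g)
      = twisted_conv (gr_add G k a1 (b1 g)) (\<lambda>t. gr_add G k a2 (b2 (g \<otimes>\<^bsub>G\<^esub> t)))"
    using g c b by (simp add: pfun_mult_def pointed_shift_def D1_to_pfun_def,
        intro twisted_conv_cong) (auto simp: gr_add_closed)
  also have "\<dots> = gr_add G k
      (gr_add G k (twisted_conv a1 (\<lambda>_. a2)) (twisted_conv a1 (\<lambda>t. b2 (g \<otimes>\<^bsub>G\<^esub> t))))
      (gr_add G k (twisted_conv (b1 g) (\<lambda>_. a2)) (twisted_conv (b1 g) (\<lambda>t. b2 (g \<otimes>\<^bsub>G\<^esub> t))))"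
    using c b by (simp add: twisted_conv_add_left gr_add_closed) (simp add: twisted_conv_add_right)
  also have "\<dots> = D1_to_pfun ((a1, b1) \<otimes>\<^bsub>D1 G k\<^esub> (a2, b2)) (Some g)"
  proof -
    have "twisted_conv a1 (\<lambda>_. a2) \<in> kG" "twisted_conv a1 (\<lambda>t. b2 (g \<otimes>\<^bsub>G\<^esub> t)) \<in> kG"
      "twisted_conv (b1 g) (\<lambda>_. a2) \<in> kG" "twisted_conv (b1 g) (\<lambda>t. b2 (g \<otimes>\<^bsub>G\<^esub> t)) \<in> kG"
      using c b by (simp_all add: twisted_conv_closed)
    then show ?thesis
      using g by (simp add: D1_mult D1_to_pfun_def grgr_add_def gr_mult_eq_twisted_conv
          act_left_eq_twisted_conv act_right_eq_twisted_conv grgr_mult_eq_twisted_conv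
          gr_add_assoc gr_add_closed)
  qed
  finally show ?thesis ..
qed

lemma D1_to_pfun_mult:
  assumes "p \<in> carrier (D1 G k)" "q \<in> carrier (D1 G k)"
  shows "D1_to_pfun (p \<otimes>\<^bsub>D1 G k\<^esub> q) = pfun_mult (D1_to_pfun p) (D1_to_pfun q)"
proof (rule ext)
  obtain a1 b1 a2 b2 where pq: "p = (a1, b1)" "q = (a2, b2)"
    by (cases p, cases q)
  have c: "a1 \<in> kG" "a2 \<in> kG" "b1 \<in> kGG" "b2 \<in> kGG"
    using assms pq by (auto simp: D1_carrier)
  fix x
  show "D1_to_pfun (p \<otimes>\<^bsub>D1 G k\<^esub> q) x = pfun_mult (D1_to_pfun p) (D1_to_pfun q) x"
  proof (cases x)
    case None
    then show ?thesis
      by (simp add: pq D1_mult D1_to_pfun_def pfun_mult_def pointed_shift_def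
          gr_mult_eq_twisted_conv)
  next
    case (Some g)
    then show ?thesis
      using D1_to_pfun_mult_Some[OF c, of g] pq
      by (cases "g \<in> carrier G") (simp_all add: D1_to_pfun_def pfun_mult_def)
  qed
qed

lemma D1_one_closed: "\<one>\<^bsub>D1 G k\<^esub> \<in> carrier (D1 G k)"
  by (simp add: D1_one D1_carrier gr_one_closed grgr_zero_closed)

lemma D1_ring: "ring (D1 G k)"
proof -
  note D1_closed = D1_mult_closed D1_one_closed D1_to_pfun_closed
    abelian_groupE(1)[OF D1_abelian_group]
  show ?thesis
  proof (rule ringI[OF D1_abelian_group])
    show "monoid (D1 G k)"
    proof (rule monoidI)
      fix x y z
      assume xyz: "x \<in> carrier (D1 G k)" "y \<in> carrier (D1 G k)" "z \<in> carrier (D1 G k)"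
      show "x \<otimes>\<^bsub>D1 G k\<^esub> y \<otimes>\<^bsub>D1 G k\<^esub> z = x \<otimes>\<^bsub>D1 G k\<^esub> (y \<otimes>\<^bsub>D1 G k\<^esub> z)"
        by (rule D1_to_pfun_inj) (use xyz in \<open>simp_all add: D1_closed D1_to_pfun_mult
            pfun_mult_assoc\<close>)
    next
      fix x
      assume x: "x \<in> carrier (D1 G k)"
      show "\<one>\<^bsub>D1 G k\<^esub> \<otimes>\<^bsub>D1 G k\<^esub> x = x" "x \<otimes>\<^bsub>D1 G k\<^esub> \<one>\<^bsub>D1 G k\<^esub> = x"
        by (rule D1_to_pfun_inj;
            use x in \<open>simp add: D1_closed D1_to_pfun_mult D1_to_pfun_one pfun_mult_one_left
              pfun_mult_one_right\<close>)+
    qed (simp_all add: D1_closed)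
  next
    fix x y z
    assume xyz: "x \<in> carrier (D1 G k)" "y \<in> carrier (D1 G k)" "z \<in> carrier (D1 G k)"
    show "(x \<oplus>\<^bsub>D1 G k\<^esub> y) \<otimes>\<^bsub>D1 G k\<^esub> z = x \<otimes>\<^bsub>D1 G k\<^esub> z \<oplus>\<^bsub>D1 G k\<^esub> y \<otimes>\<^bsub>D1 G k\<^esub> z"
      "z \<otimes>\<^bsub>D1 G k\<^esub> (x \<oplus>\<^bsub>D1 G k\<^esub> y) = z \<otimes>\<^bsub>D1 G k\<^esub> x \<oplus>\<^bsub>D1 G k\<^esub> z \<otimes>\<^bsub>D1 G k\<^esub> y"
      by (rule D1_to_pfun_inj; use xyz in \<open>simp add: D1_closed D1_to_pfun_mult D1_to_pfun_add
          pfun_mult_add_left pfun_mult_add_right\<close>)+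
  qed
qed

end

theorem lemma5p2:
  fixes G :: "('g, 'b) monoid_scheme" and k :: "('k, 'c) ring_scheme"
  assumes "group G" and "ring k"
  shows "ring (D1 G k)
    \<and> \<one>\<^bsub>D1 G k\<^esub> = (gr_one G k, \<lambda>g. gr_zero G k)
    \<and> \<zero>\<^bsub>D1 G k\<^esub> = (gr_zero G k, \<lambda>g. gr_zero G k)"
proof -
  interpret group_ring_base G k
    using assms by (rule group_ring_base.intro)
  show ?thesis
    using D1_ring by (simp add: D1_one D1_zero)
qed

end
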